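(* Let $(W,S)$ be a dihedral Coxeter system (i.e. $|S|=2$). Let $u,v\in W$ with $u<v$, and let $R=\{\alpha_t\in\Phi^+:\ u\leq vt\lhd v\}$ and $R'=\{\alpha_t\in\Phi^+:\ u\lhd ut\leq v\}$. Then the intersections $R\cap\operatorname{Cone}(R')$ and $R'\cap\operatorname{Cone}(R)$ are non-empty.
   Context: $\Phi^+$ is the set of positive roots of the standard geometric representation; $t$ ranges over reflections $T=\{wsw^{-1}\}$ and $\alpha_t$ is the positive root of $t$. $\leq$ is Bruhat order, $\lhd$ its covering relation. $\operatorname{Cone}(A)$ is the set of finite nonnegative linear combinations of elements of $A$. *)

theory Defs
  imports "HOL-Analysis.Analysis" "HOL-Library.Extended_Nat"
begin

text \<open>Dihedral Coxeter system with S = {s1, s2} and m(s1,s2) = m (2 \<le> m \<le> \<infinity>),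
 realised through its standard geometric representation on V = R^2, where a vector
 (a, b) stands for a \<alpha>_s1 + b \<alpha>_s2. The standard geometric representation is
 faithful, so W is identified with the group of linear maps generated by s1, s2;
 group multiplication is composition. Generators are indexed by bool
 (True = s1, False = s2).\<close>

definition coxc :: "enat \<Rightarrow> real" where
  "coxc m = (case m of enat k \<Rightarrow> cos (pi / real k) | \<infinity> \<Rightarrow> 1)"

definition Bform :: "enat \<Rightarrow> real \<times> real \<Rightarrow> real \<times> real \<Rightarrow> real" where
  "Bform m x y = fst x * fst y + snd x * snd y - coxc m * (fst x * snd y + snd x * fst y)"

definition sroot :: "bool \<Rightarrow> real \<times> real" where
  "sroot b = (if b then (1, 0) else (0, 1))"

definition refl_along :: "enat \<Rightarrow> real \<times> real \<Rightarrow> (real \<times> real \<Rightarrow> real \<times> real)" where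
  "refl_along m \<beta> = (\<lambda>x. x - (2 * Bform m \<beta> x) *\<^sub>R \<beta>)"

definition gen :: "enat \<Rightarrow> bool \<Rightarrow> (real \<times> real \<Rightarrow> real \<times> real)" where
  "gen m b = refl_along m (sroot b)"

fun wd :: "enat \<Rightarrow> bool list \<Rightarrow> (real \<times> real \<Rightarrow> real \<times> real)" where
  "wd m [] = id"
| "wd m (b # bs) = gen m b \<circ> wd m bs"

definition Wgrp :: "enat \<Rightarrow> (real \<times> real \<Rightarrow> real \<times> real) set" where
  "Wgrp m = range (wd m)"

definition len :: "enat \<Rightarrow> (real \<times> real \<Rightarrow> real \<times> real) \<Rightarrow> nat" where
  "len m w = (LEAST n. \<exists>bs. length bs = n \<and> wd m bs = w)"

text \<open>Reflections T = {w s w^{-1}}; for w = wd bs, w^{-1} = wd (rev bs).\<close>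
definition Refls :: "enat \<Rightarrow> (real \<times> real \<Rightarrow> real \<times> real) set" where
  "Refls m = {wd m (bs @ [b] @ rev bs) | bs b. True}"

definition Roots :: "enat \<Rightarrow> (real \<times> real) set" where
  "Roots m = {wd m bs (sroot b) | bs b. True}"

definition PosRoots :: "enat \<Rightarrow> (real \<times> real) set" where
  "PosRoots m = {\<beta> \<in> Roots m. fst \<beta> \<ge> 0 \<and> snd \<beta> \<ge> 0}"

definition root_of :: "enat \<Rightarrow> (real \<times> real \<Rightarrow> real \<times> real) \<Rightarrow> real \<times> real" where
  "root_of m t = (THE \<beta>. \<beta> \<in> PosRoots m \<and> refl_along m \<beta> = t)"

definition bruhat_step :: "enat \<Rightarrow> (real \<times> real \<Rightarrow> real \<times> real) \<Rightarrow> (real \<times> real \<Rightarrow> real \<times> real) \<Rightarrow> bool" where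
  "bruhat_step m w w' = (w \<in> Wgrp m \<and> (\<exists>t \<in> Refls m. w' = w \<circ> t \<and> len m w < len m w'))"

definition bruhat_le :: "enat \<Rightarrow> (real \<times> real \<Rightarrow> real \<times> real) \<Rightarrow> (real \<times> real \<Rightarrow> real \<times> real) \<Rightarrow> bool" where
  "bruhat_le m u v = (u \<in> Wgrp m \<and> v \<in> Wgrp m \<and> (bruhat_step m)\<^sup>*\<^sup>* u v)"

definition bruhat_less :: "enat \<Rightarrow> (real \<times> real \<Rightarrow> real \<times> real) \<Rightarrow> (real \<times> real \<Rightarrow> real \<times> real) \<Rightarrow> bool" where
  "bruhat_less m u v = (bruhat_le m u v \<and> u \<noteq> v)"

definition bruhat_cover :: "enat \<Rightarrow> (real \<times> real \<Rightarrow> real \<times> real) \<Rightarrow> (real \<times> real \<Rightarrow> real \<times> real) \<Rightarrow> bool" where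
  "bruhat_cover m u v = (bruhat_less m u v \<and> \<not> (\<exists>w. bruhat_less m u w \<and> bruhat_less m w v))"

definition Cone :: "(real \<times> real) set \<Rightarrow> (real \<times> real) set" where
  "Cone A = {x. \<exists>F c. finite F \<and> F \<subseteq> A \<and> (\<forall>a\<in>F. c a \<ge> 0) \<and> x = (\<Sum>a\<in>F. c a *\<^sub>R a)}"

end

theory Submission
  imports Defs
begin

text \<open>Every element of the dihedral group has a reduced word alternating between the two
  generators, of length at most \<open>m\<close>, and \<open>x \<le> y\<close> in Bruhat order holds exactly when
  \<open>x = y\<close> or \<open>l(x) < l(y)\<close>. If \<open>l(v) = l(u) + 1\<close>, then \<open>v = u t\<close> and \<open>\<alpha>\<^sub>t\<close> lies in both
  \<open>R\<close> and \<open>R'\<close>. Otherwise \<open>v\<close> covers the two elements obtained by deleting the last or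
  the first letter of its reduced word, and \<open>u\<close> is covered by the two elements obtained by
  appending a letter on either side. The corresponding roots are a simple root and a vector
  whose coordinates are consecutive Chebyshev values \<open>U\<^sub>k(cos (\<pi>/m))\<close>. If the two simple
  roots agree they lie in \<open>R \<inter> R'\<close>; otherwise a Cassini identity for the Chebyshev values
  writes the non-simple root of each set as a nonnegative combination of the roots of the
  other set.\<close>

lemma linear_refl_along: "linear (refl_along m \<beta>)"
  by (rule linearI) (simp_all add: refl_along_def Bform_def algebra_simps)

lemma linear_gen: "linear (gen m b)"
  unfolding gen_def by (rule linear_refl_along)

lemma linear_wd: "linear (wd m bs)"
  by (induction bs) (simp_all only: wd.simps linear_id linear_compose linear_gen)

lemma wd_append: "wd m (xs @ ys) = wd m xs \<circ> wd m ys"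
  by (induction xs) (auto simp: comp_assoc)

lemma wd_in_Wgrp [simp]: "wd m bs \<in> Wgrp m"
  by (simp add: Wgrp_def)

lemma gen_True: "gen m True (x, y) = (2 * coxc m * y - x, y)"
  by (simp add: gen_def refl_along_def sroot_def Bform_def algebra_simps)

lemma gen_False: "gen m False (x, y) = (x, 2 * coxc m * x - y)"
  by (simp add: gen_def refl_along_def sroot_def Bform_def algebra_simps)

lemma gen_gen [simp]: "gen m b (gen m b z) = z"
  by (cases z; cases b) (simp_all add: gen_True gen_False)

lemma gen_sroot: "gen m b (sroot b) = - sroot b"
  by (cases b) (simp_all add: sroot_def gen_True gen_False)

lemma wd_wd_rev [simp]: "wd m xs (wd m (rev xs) z) = z"
  by (induction xs arbitrary: z) (simp_all add: wd_append)

lemma wd_rev_wd [simp]: "wd m (rev xs) (wd m xs z) = z"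
  using wd_wd_rev[of m "rev xs"] by simp

lemma Bform_sym: "Bform m x y = Bform m y x"
  by (simp add: Bform_def algebra_simps)

lemma Bform_gen: "Bform m (gen m b x) (gen m b y) = Bform m x y"
  by (cases x; cases y; cases b) (simp_all add: Bform_def gen_True gen_False algebra_simps)

lemma Bform_wd: "Bform m (wd m bs x) (wd m bs y) = Bform m x y"
  by (induction bs) (simp_all add: Bform_gen)

lemma Bform_sroot: "Bform m (sroot b) (sroot b) = 1"
  by (cases b) (simp_all add: Bform_def sroot_def)

lemma Bform_uminus_left: "Bform m (- x) y = - Bform m x y"
  by (simp add: Bform_def algebra_simps)

lemma refl_along_uminus: "refl_along m (- \<beta>) = refl_along m \<beta>"
  by (rule ext) (simp add: refl_along_def Bform_uminus_left)

lemma refl_along_wd: "refl_along m (wd m bs \<beta>) = wd m bs \<circ> refl_along m \<beta> \<circ> wd m (rev bs)"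
proof
  fix x
  let ?y = "wd m (rev bs) x"
  have "Bform m \<beta> ?y = Bform m (wd m bs \<beta>) x"
    using Bform_wd[of m bs \<beta> ?y] by simp
  then show "refl_along m (wd m bs \<beta>) x = (wd m bs \<circ> refl_along m \<beta> \<circ> wd m (rev bs)) x"
    by (simp add: refl_along_def linear_diff[OF linear_wd] linear_scale[OF linear_wd])
qed

lemma refl_along_root: "refl_along m (wd m bs (sroot b)) = wd m (bs @ [b] @ rev bs)"
  by (simp add: refl_along_wd wd_append gen_def comp_assoc)

lemma Refls_involutive: "t \<in> Refls m \<Longrightarrow> t \<circ> t = id"
  unfolding Refls_def by (clarsimp simp: wd_append) (simp add: fun_eq_iff)

lemma Bform_self_eq_one_imp_nonzero: "Bform m \<beta> \<beta> = 1 \<Longrightarrow> \<beta> \<noteq> 0"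
  by (auto simp: Bform_def)

text \<open>Two vectors of \<open>B\<close>-norm 1 with the same reflection are equal up to sign, so the
  positivity of \<open>\<beta>\<close> singles it out.\<close>
lemma root_of_eqI:
  assumes t: "t = wd m (bs @ [b] @ rev bs)"
    and \<beta>: "\<beta> = wd m bs (sroot b) \<or> \<beta> = - wd m bs (sroot b)"
    and nonneg: "0 \<le> fst \<beta>" "0 \<le> snd \<beta>"
  shows "root_of m t = \<beta>"
  unfolding root_of_def
proof (rule the_equality)
  have "\<beta> \<in> Roots m"
  proof (cases "\<beta> = wd m bs (sroot b)")
    case False
    then have "\<beta> = wd m (bs @ [b]) (sroot b)"
      using \<beta> by (simp add: wd_append gen_sroot linear_neg[OF linear_wd])
    then show ?thesis unfolding Roots_def by blast
  qed (auto simp: Roots_def)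
  moreover have refl_\<beta>: "refl_along m \<beta> = t"
    using \<beta> t refl_along_root refl_along_uminus by metis
  ultimately show "\<beta> \<in> PosRoots m \<and> refl_along m \<beta> = t"
    using nonneg by (simp add: PosRoots_def)
  fix \<gamma> assume \<gamma>: "\<gamma> \<in> PosRoots m \<and> refl_along m \<gamma> = t"
  have B\<beta>: "Bform m \<beta> \<beta> = 1"
    using \<beta> by (auto simp: Bform_wd Bform_sroot Bform_uminus_left Bform_sym[of m _ "- _"])
  have B\<gamma>: "Bform m \<gamma> \<gamma> = 1"
    using \<gamma> by (auto simp: PosRoots_def Roots_def Bform_wd Bform_sroot)
  let ?l = "Bform m \<beta> \<gamma>"
  have "refl_along m \<gamma> \<beta> = refl_along m \<beta> \<beta>" "refl_along m \<gamma> \<gamma> = refl_along m \<beta> \<gamma>"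
    using \<gamma> refl_\<beta> by simp_all
  then have "(2 * ?l) *\<^sub>R \<gamma> = 2 *\<^sub>R \<beta>" "(2 * ?l) *\<^sub>R \<beta> = 2 *\<^sub>R \<gamma>"
    using B\<beta> B\<gamma> Bform_sym[of m \<gamma> \<beta>] by (simp_all add: refl_along_def algebra_simps)
  then have l\<gamma>: "?l *\<^sub>R \<gamma> = \<beta>" and l\<beta>: "?l *\<^sub>R \<beta> = \<gamma>"
    by (simp_all flip: scaleR_scaleR)
  then have "(?l * ?l) *\<^sub>R \<beta> = 1 *\<^sub>R \<beta>"
    by (simp flip: scaleR_scaleR)
  then have "?l * ?l = 1"
    using Bform_self_eq_one_imp_nonzero[OF B\<beta>] by (simp only: scaleR_cancel_right) simp
  then have "?l = 1 \<or> ?l = -1"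
    by (simp add: square_eq_1_iff)
  moreover have "\<gamma> \<noteq> - \<beta>"
    using \<gamma> nonneg Bform_self_eq_one_imp_nonzero[OF B\<beta>] by (auto simp: PosRoots_def prod_eq_iff)
  ultimately show "\<gamma> = \<beta>"
    using l\<beta> by auto
qed

fun alt :: "bool \<Rightarrow> nat \<Rightarrow> bool list" where
  "alt p 0 = []"
| "alt p (Suc k) = p # alt (\<not> p) k"

definition alt_next :: "bool \<Rightarrow> nat \<Rightarrow> bool" where
  "alt_next p k = (if even k then p else \<not> p)"

lemma length_alt [simp]: "length (alt p k) = k"
  by (induction k arbitrary: p) auto

lemma alt_Suc_snoc: "alt p (Suc k) = alt p k @ [alt_next p k]"
proof (induction k arbitrary: p)
  case (Suc k)
  have "alt p (Suc (Suc k)) = p # alt (\<not> p) (Suc k)"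
    by simp
  also have "\<dots> = p # (alt (\<not> p) k @ [alt_next (\<not> p) k])"
    by (simp only: Suc.IH)
  also have "\<dots> = alt p (Suc k) @ [alt_next p (Suc k)]"
    by (simp add: alt_next_def)
  finally show ?case .
qed (simp add: alt_next_def)

lemma alt_add: "alt p (i + j) = alt p i @ alt (alt_next p i) j"
  by (induction i arbitrary: p) (auto simp: alt_next_def)

lemma rev_alt: "rev (alt p k) = alt (if odd k then p else \<not> p) k"
proof (induction k arbitrary: p)
  case (Suc k)
  have "rev (alt p (Suc k)) = alt (if odd k then \<not> p else p) k @ [p]"
    using Suc[of "\<not> p"] by simp
  also have "\<dots> = alt (if odd k then \<not> p else p) (Suc k)"
    by (subst alt_Suc_snoc) (simp add: alt_next_def)
  finally show ?case by simp
qed simp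

lemma ex_rev_alt_eq_alt: "\<exists>q. rev (alt p k) = alt q k"
  using rev_alt by blast

text \<open>\<open>orient p\<close> carries coordinates computed for words beginning with \<open>s1\<close> over to words
  beginning with the generator \<open>p\<close>, by swapping the two coordinates when \<open>p = s2\<close>.\<close>
definition orient :: "bool \<Rightarrow> real \<times> real \<Rightarrow> real \<times> real" where
  "orient p z = (if p then z else prod.swap z)"

lemma orient_sroot: "sroot p = orient p (1, 0)" "sroot (\<not> p) = orient p (0, 1)"
  by (cases p; simp add: sroot_def orient_def)+

lemma orient_scaleR_add: "l *\<^sub>R orient p x + \<mu> *\<^sub>R orient p y = orient p (l *\<^sub>R x + \<mu> *\<^sub>R y)"
  by (cases p; cases x; cases y) (simp_all add: orient_def)

lemma orient_nonneg: "0 \<le> fst z \<Longrightarrow> 0 \<le> snd z \<Longrightarrow> 0 \<le> fst (orient p z) \<and> 0 \<le> snd (orient p z)"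
  by (cases p) (simp_all add: orient_def)

text \<open>For \<open>c = cos \<theta>\<close> one has \<open>cheb c k = sin (k \<theta>) / sin \<theta>\<close>, the Chebyshev polynomial
  \<open>U\<^sub>k\<^sub>-\<^sub>1\<close> of the second kind evaluated at \<open>c\<close>.\<close>
fun cheb :: "real \<Rightarrow> nat \<Rightarrow> real" where
  "cheb c 0 = 0"
| "cheb c (Suc 0) = 1"
| "cheb c (Suc (Suc k)) = 2 * c * cheb c (Suc k) - cheb c k"

lemma wd_alt_root:
  "wd m (alt p k) (sroot (alt_next p k)) = orient p (cheb (coxc m) (Suc k), cheb (coxc m) k)"
proof (induction k arbitrary: p)
  case 0
  show ?case by (cases p) (simp_all add: alt_next_def sroot_def orient_def)
next
  case (Suc k)
  have "alt_next p (Suc k) = alt_next (\<not> p) k"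
    by (simp add: alt_next_def)
  then show ?case
    using Suc[of "\<not> p"] by (cases p) (simp_all add: orient_def gen_True gen_False algebra_simps)
qed

lemma wd_alt_Suc_root:
  "wd m (alt p (Suc k)) (sroot (alt_next p k)) = - orient p (cheb (coxc m) (Suc k), cheb (coxc m) k)"
  by (simp only: alt_Suc_snoc wd_append)
     (simp add: gen_sroot linear_neg[OF linear_wd] wd_alt_root)

lemma cheb_cassini: "cheb c (Suc i) * cheb c (i + d) - cheb c i * cheb c (Suc (i + d)) = cheb c d"
proof (induction i)
  case (Suc i)
  have "cheb c (Suc (Suc i)) = 2 * c * cheb c (Suc i) - cheb c i"
    and "cheb c (Suc (Suc (i + d))) = 2 * c * cheb c (Suc (i + d)) - cheb c (i + d)"
    by simp_all
  then show ?case
    using Suc by (simp only: add_Suc) (simp add: algebra_simps)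
qed simp

lemma cheb_cos_mult_sin: "cheb (cos \<theta>) k * sin \<theta> = sin (real k * \<theta>)"
proof (induction "cos \<theta>" k rule: cheb.induct)
  case (3 k)
  have "cheb (cos \<theta>) (Suc (Suc k)) * sin \<theta>
      = 2 * cos \<theta> * (cheb (cos \<theta>) (Suc k) * sin \<theta>) - cheb (cos \<theta>) k * sin \<theta>"
    by (simp add: algebra_simps)
  also have "\<dots> = 2 * cos \<theta> * sin (real (Suc k) * \<theta>) - sin (real (Suc k) * \<theta> - \<theta>)"
    using 3 by (simp add: algebra_simps)
  also have "\<dots> = sin (real (Suc k) * \<theta> + \<theta>)"
    unfolding sin_add sin_diff by (simp add: algebra_simps)
  finally show ?case
    by (simp add: algebra_simps)
qed simp_all

lemma cheb_one: "cheb 1 k = real k"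
  by (induction "1::real" k rule: cheb.induct) (simp_all add: algebra_simps)

lemma sin_mult_pi_div_pos:
  assumes "0 < k" "k < M"
  shows "0 < sin (real k * (pi / real M))"
proof (rule sin_gt_zero)
  have "real k / real M * pi < 1 * pi"
    using assms by (intro mult_strict_right_mono) auto
  then show "real k * (pi / real M) < pi"
    by (simp add: field_simps)
qed (use assms in simp)

lemma sin_mult_pi_div_neg:
  assumes "M < k" "k < 2 * M"
  shows "sin (real k * (pi / real M)) < 0"
proof -
  have "real k * (pi / real M) = real (k - M) * (pi / real M) + pi"
    using assms by (simp add: of_nat_diff field_simps)
  then show ?thesis
    using sin_mult_pi_div_pos[of "k - M" M] assms by simp
qed

lemma cheb_coxc_enat:
  assumes "2 \<le> M"
  shows "cheb (coxc (enat M)) k = sin (real k * (pi / real M)) / sin (pi / real M)"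
    and "0 < sin (pi / real M)"
proof -
  show pos: "0 < sin (pi / real M)"
    using sin_mult_pi_div_pos[of 1 M] assms by simp
  show "cheb (coxc (enat M)) k = sin (real k * (pi / real M)) / sin (pi / real M)"
    using cheb_cos_mult_sin[of "pi / real M" k] pos by (simp add: coxc_def field_simps)
qed

lemma cheb_coxc_nonneg:
  assumes "2 \<le> m" "enat k \<le> m"
  shows "0 \<le> cheb (coxc m) k"
proof (cases m)
  case (enat M)
  then have "0 \<le> sin (real k * (pi / real M))"
    using assms sin_mult_pi_div_pos[of k M] by (cases "k = 0 \<or> k = M") auto
  then show ?thesis
    using enat assms cheb_coxc_enat[of M] by simp
qed (simp add: coxc_def cheb_one)

lemma cheb_coxc_pos:
  assumes "2 \<le> m" "0 < k" "enat k < m"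
  shows "0 < cheb (coxc m) k"
proof (cases m)
  case (enat M)
  then show ?thesis
    using assms sin_mult_pi_div_pos[of k M] cheb_coxc_enat[of M] by simp
qed (use assms in \<open>simp add: coxc_def cheb_one\<close>)

lemma cheb_coxc_enat_M:
  assumes "2 \<le> M"
  shows "cheb (coxc (enat M)) M = 0" "cheb (coxc (enat M)) (Suc M) = -1"
    and "cheb (coxc (enat M)) (M - 1) = 1"
proof -
  have "real (Suc M) * (pi / real M) = pi + pi / real M"
    and "real (M - 1) * (pi / real M) = pi - pi / real M"
    using assms by (simp_all add: of_nat_diff field_simps)
  then show "cheb (coxc (enat M)) M = 0" "cheb (coxc (enat M)) (Suc M) = -1"
    and "cheb (coxc (enat M)) (M - 1) = 1"
    using assms cheb_coxc_enat[OF assms] by (simp_all add: sin_add sin_diff)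
qed

lemma cheb_coxc_Suc_if_zero:
  assumes "2 \<le> m" "0 < j" "enat j < 2 * m" "cheb (coxc m) j = 0"
  shows "cheb (coxc m) (Suc j) = -1"
proof (cases m)
  case (enat M)
  then have "j < 2 * M"
    using assms(3) by (simp add: numeral_eq_enat)
  have "j = M"
  proof (rule ccontr)
    assume "j \<noteq> M"
    then have "sin (real j * (pi / real M)) \<noteq> 0"
      using sin_mult_pi_div_pos[of j M] sin_mult_pi_div_neg[of M j] \<open>j < 2 * M\<close> assms(2)
      by (cases "j < M") auto
    then show False
      using assms enat cheb_coxc_enat[of M] by simp
  qed
  then show ?thesis
    using cheb_coxc_enat_M[of M] enat assms by simp
qed (use assms in \<open>simp add: coxc_def cheb_one\<close>)

lemma len_witness:
  assumes "w \<in> Wgrp m"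
  obtains bs where "length bs = len m w" "wd m bs = w"
proof -
  have "\<exists>bs. length bs = len m w \<and> wd m bs = w"
    unfolding len_def by (rule LeastI_ex) (use assms in \<open>auto simp: Wgrp_def\<close>)
  then show ?thesis
    using that by blast
qed

lemma len_le_length: "wd m bs = w \<Longrightarrow> len m w \<le> length bs"
  unfolding len_def by (rule Least_le) auto

lemma eq_alt_if_no_repeat: "(\<forall>xs b ys. bs \<noteq> xs @ b # b # ys) \<Longrightarrow> bs = alt (hd bs) (length bs)"
proof (induction bs)
  case (Cons x rest)
  have "rest \<noteq> xs @ b # b # ys" for xs b ys
    using Cons.prems[rule_format, of "x # xs" b ys] by auto
  then have rest: "rest = alt (hd rest) (length rest)"
    using Cons.IH by blast
  show ?case
  proof (cases rest)
    case (Cons y zs)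
    then have "y = (\<not> x)"
      using Cons.prems[rule_format, of "[]" x zs] \<open>rest = y # zs\<close> by auto
    then show ?thesis
      using rest Cons by simp
  qed simp
qed simp

lemma reduced_word_alt:
  assumes "w \<in> Wgrp m"
  obtains p where "w = wd m (alt p (len m w))"
proof -
  obtain bs where bs: "length bs = len m w" "wd m bs = w"
    using len_witness[OF assms] .
  have "bs \<noteq> xs @ b # b # ys" for xs b ys
  proof
    assume split: "bs = xs @ b # b # ys"
    then have "wd m (xs @ ys) = w"
      using bs(2) by (simp add: wd_append fun_eq_iff)
    then show False
      using len_le_length[of m "xs @ ys" w] bs(1) split by simp
  qed
  then have "bs = alt (hd bs) (length bs)"
    by (blast intro: eq_alt_if_no_repeat)
  with bs have "w = wd m (alt (hd bs) (len m w))"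
    by simp
  then show ?thesis
    by (rule that)
qed

lemma reduced_word_rev_alt:
  assumes "w \<in> Wgrp m"
  obtains p where "w = wd m (rev (alt p (len m w)))"
proof -
  obtain q where q: "w = wd m (alt q (len m w))"
    using reduced_word_alt[OF assms] .
  obtain p where "rev (alt p (len m w)) = alt q (len m w)"
    using ex_rev_alt_eq_alt[of _ "len m w"] rev_alt[of q] by (metis rev_rev_ident)
  with q have "w = wd m (rev (alt p (len m w)))"
    by simp
  then show ?thesis
    by (rule that)
qed

lemma wd_alt_longest:
  assumes "2 \<le> M"
  shows "wd (enat M) (alt p M) z = - (if even M then z else prod.swap z)"
proof -
  let ?w = "wd (enat M) (alt p M)"
  obtain K where K: "M = Suc K"
    using assms by (cases M) auto
  have "?w (sroot (alt_next p M)) = - sroot p"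
    using wd_alt_root[of "enat M" p M] cheb_coxc_enat_M[OF assms]
    by (cases p) (simp_all add: orient_def sroot_def)
  moreover have "?w (sroot (alt_next p K)) = - sroot (\<not> p)"
    using wd_alt_Suc_root[of "enat M" p K] cheb_coxc_enat_M[OF assms] K
    by (cases p) (simp_all add: orient_def sroot_def)
  ultimately have roots: "?w (sroot b) = - (if even M then sroot b else sroot (\<not> b))" for b
    using K by (cases p; cases b) (auto simp: alt_next_def)
  have "z = fst z *\<^sub>R sroot True + snd z *\<^sub>R sroot False"
    by (simp add: sroot_def)
  then have "?w z = fst z *\<^sub>R ?w (sroot True) + snd z *\<^sub>R ?w (sroot False)"
    using linear_add[OF linear_wd] linear_scale[OF linear_wd] by metis
  then show ?thesis
    unfolding roots by (simp add: sroot_def prod_eq_iff)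
qed

lemma braid_relation: "2 \<le> M \<Longrightarrow> wd (enat M) (alt p M) = wd (enat M) (alt q M)"
  by (simp add: fun_eq_iff wd_alt_longest)

lemma len_le_enat:
  assumes "2 \<le> M" "w \<in> Wgrp (enat M)"
  shows "len (enat M) w \<le> M"
proof (rule ccontr)
  let ?m = "enat M"
  assume "\<not> len ?m w \<le> M"
  then obtain j where j: "len ?m w = Suc M + j"
    by (metis add_Suc less_imp_Suc_add not_le)
  obtain p where p: "w = wd ?m (alt p (len ?m w))"
    using reduced_word_alt[OF assms(2)] .
  obtain K where K: "M = Suc K"
    using assms by (cases M) auto
  have "wd ?m (alt p (Suc M)) = gen ?m p \<circ> wd ?m (alt p M)"
    using braid_relation[OF assms(1), of "\<not> p" p] by simp
  also have "\<dots> = wd ?m (alt (\<not> p) K)"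
    using K by (simp add: fun_eq_iff)
  finally have "w = wd ?m (alt (\<not> p) K @ alt (alt_next p (Suc M)) j)"
    using p j by (simp only: alt_add wd_append)
  then have "len ?m w \<le> length (alt (\<not> p) K @ alt (alt_next p (Suc M)) j)"
    by (intro len_le_length) simp
  then have "len ?m w \<le> K + j"
    by simp
  then show False
    using j K by simp
qed

lemma len_le: "2 \<le> m \<Longrightarrow> w \<in> Wgrp m \<Longrightarrow> enat (len m w) \<le> m"
  using len_le_enat by (cases m) (auto simp: numeral_eq_enat)

lemma wd_alt_neq_id:
  assumes "2 \<le> m" "0 < j" "enat j < 2 * m"
  shows "wd m (alt r j) \<noteq> id"
proof
  assume id: "wd m (alt r j) = id"
  obtain j' where j': "j = Suc j'"
    using assms by (cases j) auto
  let ?c = "cheb (coxc m)"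
  have fixed: "orient r (?c (Suc j), ?c j) = sroot (alt_next r j)"
    using wd_alt_root[of m r j] id by simp
  show False
  proof (cases "even j")
    case True
    then have "?c (Suc j) = 1" "?c j = 0"
      using fixed by (cases r; simp add: alt_next_def orient_def sroot_def)+
    then show False
      using cheb_coxc_Suc_if_zero[OF assms] by simp
  next
    case False
    have "- orient r (?c j, ?c j') = sroot (alt_next r j')"
      using wd_alt_Suc_root[of m r j'] id j' by (metis id_apply)
    then show False
      using fixed False j' by (cases r; simp add: alt_next_def orient_def sroot_def)
  qed
qed

lemma wd_alt_append_alt:
  "n < k \<Longrightarrow> \<exists>r j. wd m (alt q n @ alt p k) = wd m (alt r j) \<and> k - n \<le> j \<and> j \<le> n + k"
proof (induction n arbitrary: p k)
  case (Suc n)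
  let ?x = "alt_next q n"
  have split: "alt q (Suc n) @ alt p k = alt q n @ (?x # alt p k)"
    by (simp only: alt_Suc_snoc append_assoc append_Cons append_Nil)
  show ?case
  proof (cases "?x = p")
    case False
    then have "alt q (Suc n) @ alt p k = alt q n @ alt ?x (Suc k)"
      using split by auto
    moreover obtain r j where
      "wd m (alt q n @ alt ?x (Suc k)) = wd m (alt r j)" "Suc k - n \<le> j" "j \<le> n + Suc k"
      using Suc.IH[of "Suc k" ?x] Suc.prems by auto
    ultimately have "wd m (alt q (Suc n) @ alt p k) = wd m (alt r j)" "k - Suc n \<le> j" "j \<le> Suc n + k"
      by simp_all
    then show ?thesis
      by blast
  next
    case True
    obtain k' where k': "k = Suc k'"
      using Suc.prems by (cases k) auto
    have "wd m (alt q (Suc n) @ alt p k) = wd m (alt q n @ alt (\<not> p) k')"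
      using split True k' by (simp add: wd_append fun_eq_iff)
    moreover obtain r j where
      "wd m (alt q n @ alt (\<not> p) k') = wd m (alt r j)" "k' - n \<le> j" "j \<le> n + k'"
      using Suc.IH[of k' "\<not> p"] Suc.prems k' by auto
    ultimately have "wd m (alt q (Suc n) @ alt p k) = wd m (alt r j)" "k - Suc n \<le> j" "j \<le> Suc n + k"
      using k' by simp_all
    then show ?thesis
      by blast
  qed
qed auto

text \<open>A shorter word for \<open>wd m (alt p k)\<close> would yield a nonempty alternating word of
  length below \<open>2 m\<close> representing the identity.\<close>
lemma len_wd_alt:
  assumes "2 \<le> m" "enat k \<le> m"
  shows "len m (wd m (alt p k)) = k"
proof (rule ccontr)
  let ?w = "wd m (alt p k)"
  let ?n = "len m ?w"
  assume "?n \<noteq> k"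
  then have lt: "?n < k"
    using len_le_length[of m "alt p k"] by simp
  obtain q where q: "?w = wd m (alt q ?n)"
    using reduced_word_alt[of ?w m] by auto
  obtain q' where q': "rev (alt q ?n) = alt q' ?n"
    using ex_rev_alt_eq_alt by blast
  have "wd m (rev (alt q ?n) @ alt p k) = id"
    using q by (simp add: wd_append fun_eq_iff)
  then have "wd m (alt q' ?n @ alt p k) = id"
    using q' by simp
  moreover obtain r j where "wd m (alt q' ?n @ alt p k) = wd m (alt r j)" "k - ?n \<le> j" "j \<le> ?n + k"
    using wd_alt_append_alt[OF lt] by blast
  moreover have "0 < j" "enat j < 2 * m"
    using calculation(3,4) assms(2) lt by (cases m; simp add: numeral_eq_enat)+
  ultimately show False
    using wd_alt_neq_id[OF assms(1)] by metis
qed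

lemma len_wd_rev_alt: "2 \<le> m \<Longrightarrow> enat k \<le> m \<Longrightarrow> len m (wd m (rev (alt p k))) = k"
  using ex_rev_alt_eq_alt[of p k] len_wd_alt by metis

lemma bruhat_step_len_less: "bruhat_step m x y \<Longrightarrow> len m x < len m y"
  by (auto simp: bruhat_step_def)

lemma rtranclp_bruhat_step_len: "(bruhat_step m)\<^sup>*\<^sup>* x y \<Longrightarrow> x = y \<or> len m x < len m y"
  by (induction rule: rtranclp_induct) (auto dest: bruhat_step_len_less)

lemma rtranclp_bruhat_step_single:
  assumes "(bruhat_step m)\<^sup>*\<^sup>* x y" "x \<noteq> y" "len m y \<le> Suc (len m x)"
  shows "bruhat_step m x y"
  using assms(1)
proof (cases rule: converse_rtranclpE)
  case (step w)
  then have "len m x < len m w" "w = y \<or> len m w < len m y"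
    using bruhat_step_len_less rtranclp_bruhat_step_len by blast+
  then show ?thesis
    using step assms(3) by auto
qed (use assms in simp)

lemma Refls_conj: "wd m (bs @ [b] @ rev bs) \<in> Refls m"
  unfolding Refls_def by blast

lemma Refls_gen: "gen m b \<in> Refls m"
  using Refls_conj[of m "[]" b] by simp

lemma rtranclp_bruhat_step_alt:
  assumes "2 \<le> m" "enat (j + d) \<le> m"
  shows "(bruhat_step m)\<^sup>*\<^sup>* (wd m (alt p j)) (wd m (alt p (j + d)))"
  using assms(2)
proof (induction d)
  case (Suc d)
  have le: "enat (j + d) \<le> m"
    by (rule order_trans[OF _ Suc.prems]) simp
  have "wd m (alt p (j + Suc d)) = wd m (alt p (j + d)) \<circ> gen m (alt_next p (j + d))"
    by (simp only: add_Suc_right alt_Suc_snoc wd_append) simp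
  moreover have "len m (wd m (alt p (j + d))) < len m (wd m (alt p (j + Suc d)))"
    using len_wd_alt[OF assms(1) le] len_wd_alt[OF assms(1) Suc.prems] by simp
  ultimately have "bruhat_step m (wd m (alt p (j + d))) (wd m (alt p (j + Suc d)))"
    unfolding bruhat_step_def using Refls_gen wd_in_Wgrp by blast
  with Suc.IH[OF le] show ?case
    by (meson rtranclp.rtrancl_into_rtrancl)
qed simp

lemma bruhat_le_wd_alt:
  assumes "2 \<le> m" "x \<in> Wgrp m" "len m x < k" "enat k \<le> m"
  shows "bruhat_le m x (wd m (alt q k))"
proof -
  obtain p where p: "x = wd m (alt p (len m x))"
    using reduced_word_alt[OF assms(2)] .
  obtain k' where k': "k = Suc k'"
    using assms(3) by (cases k) auto
  have le': "enat k' \<le> m"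
    by (rule order_trans[OF _ assms(4)]) (simp add: k')
  have "(bruhat_step m)\<^sup>*\<^sup>* x (wd m (alt q k))"
  proof (cases "q = p")
    case True
    then show ?thesis
      using rtranclp_bruhat_step_alt[OF assms(1), of "len m x" "k - len m x" p] assms(3,4) p by simp
  next
    case False
    let ?bs = "alt p k'"
    have "alt q k = q # ?bs"
      using k' False by (cases q; cases p) auto
    then have "wd m (alt q k) = wd m ?bs \<circ> wd m (rev ?bs @ [q] @ rev (rev ?bs))"
      by (simp add: wd_append fun_eq_iff)
    moreover have "len m (wd m ?bs) < len m (wd m (alt q k))"
      using len_wd_alt[OF assms(1) le'] len_wd_alt[OF assms(1) assms(4)] k' by simp
    ultimately have "bruhat_step m (wd m ?bs) (wd m (alt q k))"
      unfolding bruhat_step_def using Refls_conj wd_in_Wgrp by blast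
    moreover have "(bruhat_step m)\<^sup>*\<^sup>* x (wd m ?bs)"
      using rtranclp_bruhat_step_alt[OF assms(1), of "len m x" "k' - len m x" p] assms(3) k' le' p
      by simp
    ultimately show ?thesis
      by simp
  qed
  then show ?thesis
    using assms(2) by (simp add: bruhat_le_def)
qed

lemma bruhat_le_iff_len:
  assumes "2 \<le> m" "x \<in> Wgrp m" "y \<in> Wgrp m"
  shows "bruhat_le m x y \<longleftrightarrow> x = y \<or> len m x < len m y"
proof
  assume "x = y \<or> len m x < len m y"
  then show "bruhat_le m x y"
  proof
    assume "len m x < len m y"
    moreover obtain q where "y = wd m (alt q (len m y))"
      using reduced_word_alt[OF assms(3)] .
    ultimately show ?thesis
      using bruhat_le_wd_alt[OF assms(1,2) _ len_le[OF assms(1,3)]] by metis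
  qed (use assms in \<open>simp add: bruhat_le_def\<close>)
qed (auto simp: bruhat_le_def dest: rtranclp_bruhat_step_len)

lemma bruhat_cover_if_len_Suc:
  assumes "bruhat_le m x y" "len m y = Suc (len m x)"
  shows "bruhat_cover m x y"
proof -
  have "len m x < len m w \<and> len m w < len m y" if "bruhat_less m x w" "bruhat_less m w y" for w
    using that rtranclp_bruhat_step_len by (fastforce simp: bruhat_less_def bruhat_le_def)
  then show ?thesis
    using assms by (fastforce simp: bruhat_cover_def bruhat_less_def)
qed

definition lower_roots ::
    "enat \<Rightarrow> (real \<times> real \<Rightarrow> real \<times> real) \<Rightarrow> (real \<times> real \<Rightarrow> real \<times> real) \<Rightarrow> (real \<times> real) set" where
  "lower_roots m u v = {root_of m t | t. t \<in> Refls m \<and> bruhat_le m u (v \<circ> t) \<and> bruhat_cover m (v \<circ> t) v}"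

definition upper_roots ::
    "enat \<Rightarrow> (real \<times> real \<Rightarrow> real \<times> real) \<Rightarrow> (real \<times> real \<Rightarrow> real \<times> real) \<Rightarrow> (real \<times> real) set" where
  "upper_roots m u v = {root_of m t | t. t \<in> Refls m \<and> bruhat_cover m u (u \<circ> t) \<and> bruhat_le m (u \<circ> t) v}"

lemma root_of_gen: "root_of m (gen m p) = sroot p"
  by (rule root_of_eqI[where bs = "[]" and b = p]) (auto simp: sroot_def)

lemma root_of_conj_alt:
  assumes "2 \<le> m" "enat (Suc k) \<le> m"
  shows "root_of m (wd m (alt p k @ [alt_next p k] @ rev (alt p k)))
    = orient p (cheb (coxc m) (Suc k), cheb (coxc m) k)"
proof (rule root_of_eqI[where bs = "alt p k" and b = "alt_next p k"])
  have "enat k \<le> m"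
    by (rule order_trans[OF _ assms(2)]) simp
  then show "0 \<le> fst (orient p (cheb (coxc m) (Suc k), cheb (coxc m) k))"
    and "0 \<le> snd (orient p (cheb (coxc m) (Suc k), cheb (coxc m) k))"
    using orient_nonneg cheb_coxc_nonneg[OF assms(1)] assms(2) by simp_all
qed (simp_all add: wd_alt_root)

lemma wd_rev_alt_Suc_gen: "wd m (rev (alt p (Suc k))) = wd m (rev (alt (\<not> p) k)) \<circ> gen m p"
  by (simp add: wd_append)

lemma wd_rev_alt_Suc_conj:
  "wd m (rev (alt p (Suc k))) = wd m (rev (alt p k)) \<circ> wd m (alt p k @ [alt_next p k] @ rev (alt p k))"
  by (simp only: alt_Suc_snoc) (simp add: wd_append fun_eq_iff)

lemma upper_roots_of_len_gap:
  assumes "2 \<le> m" "u = wd m (rev (alt p a))" "v \<in> Wgrp m" "Suc a < len m v"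
  shows "sroot (\<not> p) \<in> upper_roots m u v"
    and "orient p (cheb (coxc m) (Suc a), cheb (coxc m) a) \<in> upper_roots m u v"
proof -
  have "enat (Suc a) \<le> m"
    by (rule order_trans[OF _ len_le[OF assms(1,3)]]) (use assms(4) in simp)
  moreover have "enat a \<le> m"
    by (rule order_trans[OF _ calculation]) simp
  ultimately have len_u: "len m u = a"
    using assms(1,2) len_wd_rev_alt by simp
  have member: "root_of m t \<in> upper_roots m u v"
    if "t \<in> Refls m" "u \<circ> t = wd m (rev (alt q (Suc a)))" for t q
  proof -
    have "len m (u \<circ> t) = Suc a"
      using that(2) len_wd_rev_alt[OF assms(1) \<open>enat (Suc a) \<le> m\<close>] by simp
    then have "bruhat_cover m u (u \<circ> t)" "bruhat_le m (u \<circ> t) v"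
      using bruhat_le_iff_len[OF assms(1)] bruhat_cover_if_len_Suc assms len_u that(2)
      by simp_all
    then show ?thesis
      using that(1) unfolding upper_roots_def by blast
  qed
  show "sroot (\<not> p) \<in> upper_roots m u v"
    using member[OF Refls_gen[of m "\<not> p"], where q = "\<not> p"] wd_rev_alt_Suc_gen[of m "\<not> p" a]
      assms(2) by (simp add: root_of_gen)
  show "orient p (cheb (coxc m) (Suc a), cheb (coxc m) a) \<in> upper_roots m u v"
    using member[OF Refls_conj[of m "alt p a" "alt_next p a"], where q = p]
      wd_rev_alt_Suc_conj[of m p a] assms(2) root_of_conj_alt[OF assms(1) \<open>enat (Suc a) \<le> m\<close>]
    by simp
qed

lemma lower_roots_of_len_gap:
  assumes "2 \<le> m" "v = wd m (rev (alt p (Suc b)))" "enat (Suc b) \<le> m" "u \<in> Wgrp m" "len m u < b"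
  shows "sroot p \<in> lower_roots m u v"
    and "orient p (cheb (coxc m) (Suc b), cheb (coxc m) b) \<in> lower_roots m u v"
proof -
  have "enat b \<le> m"
    by (rule order_trans[OF _ assms(3)]) simp
  have member: "root_of m t \<in> lower_roots m u v"
    if "t \<in> Refls m" "v = wd m (rev (alt q b)) \<circ> t" for t q
  proof -
    have vt: "v \<circ> t = wd m (rev (alt q b))"
      using that Refls_involutive by (simp add: comp_assoc)
    have "len m v = Suc b"
      by (simp only: assms(2) len_wd_rev_alt[OF assms(1,3)])
    moreover have "len m (v \<circ> t) = b"
      using vt len_wd_rev_alt[OF assms(1) \<open>enat b \<le> m\<close>] by simp
    ultimately have "bruhat_le m u (v \<circ> t)" "bruhat_cover m (v \<circ> t) v"
      using bruhat_le_iff_len[OF assms(1)] bruhat_cover_if_len_Suc assms(2,4,5) vt by simp_all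
    then show ?thesis
      using that(1) unfolding lower_roots_def by blast
  qed
  show "sroot p \<in> lower_roots m u v"
    using member[OF Refls_gen[of m p], where q = "\<not> p"] wd_rev_alt_Suc_gen[of m p b] assms(2)
    by (simp add: root_of_gen)
  show "orient p (cheb (coxc m) (Suc b), cheb (coxc m) b) \<in> lower_roots m u v"
    using member[OF Refls_conj[of m "alt p b" "alt_next p b"], where q = p]
      wd_rev_alt_Suc_conj[of m p b] assms(2) root_of_conj_alt[OF assms(1,3)]
    by simp
qed

lemma cover_root_mem_lower_upper:
  assumes "2 \<le> m" "bruhat_le m u v" "u \<noteq> v" "len m v = Suc (len m u)"
  obtains \<beta> where "\<beta> \<in> lower_roots m u v" "\<beta> \<in> upper_roots m u v"
proof -
  have W: "u \<in> Wgrp m" "v \<in> Wgrp m" and "(bruhat_step m)\<^sup>*\<^sup>* u v"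
    using assms(2) by (simp_all add: bruhat_le_def)
  then have "bruhat_step m u v"
    using rtranclp_bruhat_step_single assms(3,4) by simp
  then obtain t where t: "t \<in> Refls m" "v = u \<circ> t"
    by (auto simp: bruhat_step_def)
  then have "v \<circ> t = u"
    using Refls_involutive by (simp add: comp_assoc)
  moreover have "bruhat_cover m u v"
    using bruhat_cover_if_len_Suc assms(2,4) .
  moreover have "bruhat_le m u u" "bruhat_le m v v"
    using W by (simp_all add: bruhat_le_def)
  ultimately have "root_of m t \<in> lower_roots m u v" "root_of m t \<in> upper_roots m u v"
    using t unfolding lower_roots_def upper_roots_def by auto
  then show ?thesis
    by (rule that)
qed

lemma Cone_mono: "A \<subseteq> B \<Longrightarrow> Cone A \<subseteq> Cone B"
  unfolding Cone_def by blast

lemma scaleR_add_mem_Cone: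
  assumes "x \<in> A" "y \<in> A" "0 \<le> l" "0 \<le> \<mu>"
  shows "l *\<^sub>R x + \<mu> *\<^sub>R y \<in> Cone A"
proof (cases "x = y")
  case True
  then have "l *\<^sub>R x + \<mu> *\<^sub>R y = (\<Sum>a\<in>{x}. (l + \<mu>) *\<^sub>R a)"
    by (simp add: scaleR_add_left)
  then show ?thesis
    unfolding Cone_def using assms by (intro CollectI exI[of _ "{x}"] exI[of _ "\<lambda>_. l + \<mu>"]) auto
next
  case False
  let ?c = "\<lambda>z. if z = x then l else \<mu>"
  have "l *\<^sub>R x + \<mu> *\<^sub>R y = (\<Sum>a\<in>{x, y}. ?c a *\<^sub>R a)"
    using False by simp
  then show ?thesis
    unfolding Cone_def using assms by (intro CollectI exI[of _ "{x, y}"] exI[of _ ?c]) auto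
qed

lemma mem_Cone: "x \<in> A \<Longrightarrow> x \<in> Cone A"
  using scaleR_add_mem_Cone[of x A x 1 0] by simp

text \<open>Both memberships come from the Cassini-type identity
  \<open>U (a+1) U b - U a U (b+1) = U (b-a)\<close> for \<open>U = cheb (coxc m)\<close>; the coefficients are
  nonnegative because \<open>b < m\<close>.\<close>
lemma orient_cheb_mem_Cone:
  assumes "2 \<le> m" "a < b" "enat (Suc b) \<le> m"
  shows "orient p (cheb (coxc m) (Suc a), cheb (coxc m) a)
      \<in> Cone {sroot p, orient p (cheb (coxc m) (Suc b), cheb (coxc m) b)}"
    and "orient p (cheb (coxc m) (Suc b), cheb (coxc m) b)
      \<in> Cone {sroot (\<not> p), orient p (cheb (coxc m) (Suc a), cheb (coxc m) a)}"
proof -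
  let ?U = "cheb (coxc m)"
  have le: "enat k \<le> m" if "k \<le> Suc b" for k
    by (rule order_trans[OF _ assms(3)]) (use that in simp)
  have lt: "enat k < m" if "k \<le> b" for k
    by (rule less_le_trans[OF _ assms(3)]) (use that in simp)
  have pos: "0 < ?U b" "0 < ?U (Suc a)"
    using cheb_coxc_pos[OF assms(1)] lt assms(2) by simp_all
  have nonneg: "0 \<le> ?U (b - a)" "0 \<le> ?U a" "0 \<le> ?U (Suc b)"
    using cheb_coxc_nonneg[OF assms(1)] le assms(2) by simp_all
  have cassini: "?U (Suc a) * ?U b - ?U a * ?U (Suc b) = ?U (b - a)"
    using cheb_cassini[of "coxc m" a "b - a"] assms(2) by simp
  have "(?U (Suc a), ?U a) = (?U (b - a) / ?U b) *\<^sub>R (1, 0) + (?U a / ?U b) *\<^sub>R (?U (Suc b), ?U b)"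
    using pos cassini by (simp add: field_simps)
  then have "orient p (?U (Suc a), ?U a)
      = (?U (b - a) / ?U b) *\<^sub>R sroot p + (?U a / ?U b) *\<^sub>R orient p (?U (Suc b), ?U b)"
    unfolding orient_sroot(1) orient_scaleR_add by (simp only:)
  then show "orient p (?U (Suc a), ?U a) \<in> Cone {sroot p, orient p (?U (Suc b), ?U b)}"
    using pos nonneg by (simp add: scaleR_add_mem_Cone)
  have "(?U (Suc b), ?U b) = (?U (b - a) / ?U (Suc a)) *\<^sub>R (0, 1) + (?U (Suc b) / ?U (Suc a)) *\<^sub>R (?U (Suc a), ?U a)"
    using pos cassini by (simp add: field_simps)
  then have "orient p (?U (Suc b), ?U b)
      = (?U (b - a) / ?U (Suc a)) *\<^sub>R sroot (\<not> p) + (?U (Suc b) / ?U (Suc a)) *\<^sub>R orient p (?U (Suc a), ?U a)"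
    unfolding orient_sroot(2) orient_scaleR_add by (simp only:)
  then show "orient p (?U (Suc b), ?U b) \<in> Cone {sroot (\<not> p), orient p (?U (Suc a), ?U a)}"
    using pos nonneg by (simp add: scaleR_add_mem_Cone)
qed

theorem proposition3p7:
  fixes m :: enat and u v :: "real \<times> real \<Rightarrow> real \<times> real"
  assumes "m \<ge> 2"
    and "u \<in> Wgrp m" and "v \<in> Wgrp m"
    and "bruhat_less m u v"
  defines "R \<equiv> {root_of m t | t. t \<in> Refls m \<and> bruhat_le m u (v \<circ> t) \<and> bruhat_cover m (v \<circ> t) v}"
    and "R' \<equiv> {root_of m t | t. t \<in> Refls m \<and> bruhat_cover m u (u \<circ> t) \<and> bruhat_le m (u \<circ> t) v}"
  shows "R \<inter> Cone R' \<noteq> {} \<and> R' \<inter> Cone R \<noteq> {}"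
proof -
  have R: "R = lower_roots m u v" and R': "R' = upper_roots m u v"
    unfolding R_def R'_def lower_roots_def upper_roots_def by (rule refl)+
  have le: "bruhat_le m u v" and "u \<noteq> v"
    using assms(4) by (simp_all add: bruhat_less_def)
  then have "len m u < len m v"
    using bruhat_le_iff_len[OF assms(1-3)] by simp
  show ?thesis
  proof (cases "len m v = Suc (len m u)")
    case True
    then obtain \<beta> where "\<beta> \<in> lower_roots m u v" "\<beta> \<in> upper_roots m u v"
      using cover_root_mem_lower_upper[OF assms(1) le \<open>u \<noteq> v\<close>] by blast
    then show ?thesis
      unfolding R R' using mem_Cone by blast
  next
    case False
    then obtain b where b: "len m v = Suc b" "len m u < b"
      using \<open>len m u < len m v\<close> by (cases "len m v") auto
    obtain p where u: "u = wd m (rev (alt p (len m u)))"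
      using reduced_word_rev_alt[OF assms(2)] .
    obtain q where v: "v = wd m (rev (alt q (Suc b)))"
      using reduced_word_rev_alt[OF assms(3), unfolded b(1)] .
    have "enat (Suc b) \<le> m"
      using len_le[OF assms(1,3)] b(1) by simp
    note lower = lower_roots_of_len_gap[OF assms(1) v this assms(2) b(2)]
    note upper = upper_roots_of_len_gap[OF assms(1) u assms(3), unfolded b(1), OF Suc_mono[OF b(2)]]
    show ?thesis
    proof (cases "q = p")
      case True
      let ?x = "orient p (cheb (coxc m) (Suc (len m u)), cheb (coxc m) (len m u))"
      let ?y = "orient p (cheb (coxc m) (Suc b), cheb (coxc m) b)"
      note cone = orient_cheb_mem_Cone[OF assms(1) b(2) \<open>enat (Suc b) \<le> m\<close>, of p]
      have "?x \<in> Cone (lower_roots m u v)"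
        using cone(1) Cone_mono[of "{sroot p, ?y}" "lower_roots m u v"] lower True by auto
      moreover have "?y \<in> Cone (upper_roots m u v)"
        using cone(2) Cone_mono[of "{sroot (\<not> p), ?x}" "upper_roots m u v"] upper by auto
      ultimately show ?thesis
        unfolding R R' using lower(2) upper(2) True by blast
    next
      case False
      then have "sroot q = sroot (\<not> p)"
        by (cases p; cases q) auto
      then have "sroot q \<in> lower_roots m u v \<inter> upper_roots m u v"
        using lower(1) upper(1) by simp
      then show ?thesis
        unfolding R R' by (blast intro: mem_Cone)
    qed
  qed
qed

end
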